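(* Let $\{X,F\}$ and $\{Y,F\}$ be compatible pairs of skew invertible operators $X,Y,F\in\mathrm{End}(V\otimes V)$, with $F$ invertible. Then $$F_{12}C_{X,1}C_{Y,2}=C_{Y,1}C_{X,2}F_{12},\qquad F_{12}D_{X,1}D_{Y,2}=D_{Y,1}D_{X,2}F_{12},$$ $$F_{12}(C_XD_Y)_2=(C_XD_Y)_1F_{12},\qquad F_{12}(D_YC_X)_1=(D_YC_X)_2F_{12},$$ $$\mathrm{Tr}_{(1)}(C_{X,1}F_{12}^{-1})=(C_XD_F)_2=(D_FC_X)_2,\qquad \mathrm{Tr}_{(2)}(D_{X,2}F_{12}^{-1})=(C_FD_X)_1=(D_XC_F)_1 .$$
   Context: $V$ is a complex vector space of dimension $N$ with a fixed basis. For $X\in\mathrm{End}(V\otimes V)$ and $m<r$, $X_{mr}$ denotes the operator on $V^{\otimes n}$ acting as $X$ on tensor factors $m,r$ and as the identity elsewhere, $X_m:=X_{m,m+1}$; for $Y\in\mathrm{End}(V)$, $Y_m$ acts as $Y$ on factor $m$. $P$ is the flip $u\otimes v\mapsto v\otimes u$; $\mathrm{Tr}_{(i)}$ is partial trace over factor $i$. $X$ is skew invertible if there is $\Psi_X\in\mathrm{End}(V\otimes V)$ with $\mathrm{Tr}_{(2)}X_{12}\Psi_{X,23}=\mathrm{Tr}_{(2)}\Psi_{X,12}X_{23}=P_{13}$; then $C_X:=\mathrm{Tr}_{(1)}\Psi_{X,12}$, $D_X:=\mathrm{Tr}_{(2)}\Psi_{X,12}$. A pair $\{X,F\}$ is compatible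 if $X_1F_2F_1=F_2F_1X_2$ and $X_2F_1F_2=F_1F_2X_1$. *)

theory Defs
  imports "HOL-Analysis.Analysis"
begin

text \<open>V = complex^'n with the standard basis (N = CARD('n)).
  Operators are matrices w.r.t. the product basis; a basis index of V tensor V is
  a pair (i,j) (first component = first tensor factor), of V^3 a triple (i,j,k).
  Convention: A $ row $ column.\<close>

type_synonym 'n op1 = "complex^'n^'n"
type_synonym 'n op2 = "complex^('n\<times>'n)^('n\<times>'n)"
type_synonym 'n op3 = "complex^('n\<times>'n\<times>'n)^('n\<times>'n\<times>'n)"

definition kd :: "'a \<Rightarrow> 'a \<Rightarrow> complex" where
  "kd a b = (if a = b then 1 else 0)"

definition flip :: "('n::finite) op2" where
  "flip = (\<chi> p. \<chi> q. (case (p,q) of ((i,j),(k,l)) \<Rightarrow> kd i l * kd j k))"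

definition on1 :: "('n::finite) op1 \<Rightarrow> 'n op2" where
  "on1 Y = (\<chi> p. \<chi> q. (case (p,q) of ((i,j),(k,l)) \<Rightarrow> Y $ i $ k * kd j l))"
definition on2 :: "('n::finite) op1 \<Rightarrow> 'n op2" where
  "on2 Y = (\<chi> p. \<chi> q. (case (p,q) of ((i,j),(k,l)) \<Rightarrow> kd i k * Y $ j $ l))"

definition on12 :: "('n::finite) op2 \<Rightarrow> 'n op3" where
  "on12 X = (\<chi> p. \<chi> q. (case (p,q) of ((i,j,k),(i',j',k')) \<Rightarrow> X $ (i,j) $ (i',j') * kd k k'))"
definition on23 :: "('n::finite) op2 \<Rightarrow> 'n op3" where
  "on23 X = (\<chi> p. \<chi> q. (case (p,q) of ((i,j,k),(i',j',k')) \<Rightarrow> kd i i' * X $ (j,k) $ (j',k')))"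

definition tr_mid :: "('n::finite) op3 \<Rightarrow> 'n op2" where
  "tr_mid A = (\<chi> p. \<chi> q. (case (p,q) of ((i,k),(i',k')) \<Rightarrow> \<Sum>j\<in>UNIV. A $ (i,j,k) $ (i',j,k')))"

definition tr1 :: "('n::finite) op2 \<Rightarrow> 'n op1" where
  "tr1 A = (\<chi> j. \<chi> j'. \<Sum>i\<in>UNIV. A $ (i,j) $ (i,j'))"
definition tr2 :: "('n::finite) op2 \<Rightarrow> 'n op1" where
  "tr2 A = (\<chi> i. \<chi> i'. \<Sum>j\<in>UNIV. A $ (i,j) $ (i',j))"

definition is_skew_inverse :: "('n::finite) op2 \<Rightarrow> 'n op2 \<Rightarrow> bool" where
  "is_skew_inverse X Psi \<longleftrightarrow>
     tr_mid (on12 X ** on23 Psi) = flip \<and> tr_mid (on12 Psi ** on23 X) = flip"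

definition skew_invertible :: "('n::finite) op2 \<Rightarrow> bool" where
  "skew_invertible X \<longleftrightarrow> (\<exists>Psi. is_skew_inverse X Psi)"

definition skew_inv :: "('n::finite) op2 \<Rightarrow> 'n op2" where
  "skew_inv X = (SOME Psi. is_skew_inverse X Psi)"

definition C_op :: "('n::finite) op2 \<Rightarrow> 'n op1" where
  "C_op X = tr1 (skew_inv X)"
definition D_op :: "('n::finite) op2 \<Rightarrow> 'n op1" where
  "D_op X = tr2 (skew_inv X)"

definition compatible :: "('n::finite) op2 \<Rightarrow> 'n op2 \<Rightarrow> bool" where
  "compatible X F \<longleftrightarrow>
     on12 X ** on23 F ** on12 F = on23 F ** on12 F ** on23 X \<and>
     on23 X ** on12 F ** on23 F = on12 F ** on23 F ** on12 X"

end

theory Submission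
  imports Defs
begin

text \<open>The core is the identity \<open>F\<^sup>-\<^sup>1 C\<^sub>X\<^sub>,\<^sub>1 = C\<^sub>X\<^sub>,\<^sub>2 \<Psi>\<^sub>F\<^sub>,\<^sub>2\<^sub>1\<close>.
  On \<open>End(V\<otimes>V)\<close> the product \<open>A \<star> B = Tr\<^sub>(\<^sub>2\<^sub>)(A\<^sub>1\<^sub>2 B\<^sub>2\<^sub>3)\<close> is associative with unit \<open>P\<close>,
  and \<open>\<Psi>\<^sub>X\<close> is the \<open>\<star>\<close>-inverse of \<open>X\<close>. Applying \<open>Tr\<^sub>(\<^sub>1\<^sub>)(C\<^sub>X\<^sub>,\<^sub>1 \<cdot>)\<close> to the compatibility relation
  \<open>X\<^sub>1\<^sub>2 F\<^sub>2\<^sub>3 = F\<^sub>2\<^sub>3 (F\<^sub>1\<^sub>2 X\<^sub>2\<^sub>3 F\<^sup>-\<^sup>1\<^sub>1\<^sub>2)\<close> and using \<open>Tr\<^sub>(\<^sub>1\<^sub>)(C\<^sub>X\<^sub>,\<^sub>1 X\<^sub>1\<^sub>2) = 1\<close> shows that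
  \<open>((F\<^sub>2\<^sub>1 \<star> F\<^sup>-\<^sup>1 C\<^sub>X\<^sub>,\<^sub>1) P) \<star> X = 1\<close>; hence \<open>(F\<^sub>2\<^sub>1 \<star> F\<^sup>-\<^sup>1 C\<^sub>X\<^sub>,\<^sub>1) P = C\<^sub>X\<^sub>,\<^sub>2\<close>, and
  \<open>\<star>\<close>-multiplying by \<open>\<Psi>\<^sub>F\<^sub>,\<^sub>2\<^sub>1\<close> gives the identity. Transposition and the reversal of the
  tensor factors preserve all hypotheses, the reversal exchanging \<open>C\<close> and \<open>D\<close>; they turn the
  identity into \<open>C\<^sub>X\<^sub>,\<^sub>1 F\<^sup>-\<^sup>1 = \<Psi>\<^sub>F\<^sub>,\<^sub>2\<^sub>1 C\<^sub>X\<^sub>,\<^sub>2\<close> and the two analogues for \<open>D\<^sub>X\<close>.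
  Each claim then follows by conjugating with \<open>F\<close> or by taking a partial trace.\<close>

lemma op1_eqI: "(\<And>i j. A $ i $ j = B $ i $ j) \<Longrightarrow> A = (B::('n::finite) op1)"
  by (simp add: vec_eq_iff)

lemma op2_eqI: "(\<And>i j k l. A $ (i,j) $ (k,l) = B $ (i,j) $ (k,l)) \<Longrightarrow> A = (B::('n::finite) op2)"
  by (simp add: vec_eq_iff)

lemma op3_eqI:
  "(\<And>i j k i' j' k'. A $ (i,j,k) $ (i',j',k') = B $ (i,j,k) $ (i',j',k')) \<Longrightarrow> A = (B::('n::finite) op3)"
  by (simp add: vec_eq_iff)

lemma sum_UNIV_prod:
  "(\<Sum>p\<in>UNIV. f p) = (\<Sum>a\<in>(UNIV::'a::finite set). \<Sum>b\<in>(UNIV::'b::finite set). f (a,b))"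
  by (simp add: sum.cartesian_product)

lemma matrix_mult_entry: "(A ** B) $ i $ j = (\<Sum>k\<in>UNIV. A $ i $ k * B $ k $ j)"
  by (simp add: matrix_matrix_mult_def)

lemma if_zero_mult_simps [simp]:
  "(x::complex) * (if P then 1 else 0) = (if P then x else 0)"
  "(if P then 1 else 0) * (x::complex) = (if P then x else 0)"
  "(if P then x else 0) * (y::complex) = (if P then x * y else 0)"
  "(y::complex) * (if P then x else 0) = (if P then y * x else 0)"
  by auto

lemma sum_if_const [simp]: "(\<Sum>x\<in>A. if P then f x else 0) = (if P then \<Sum>x\<in>A. f x else 0)"
  by auto

lemma flip_entry [simp]: "flip $ (i,j) $ (k,l) = kd i l * kd j k"
  by (simp add: flip_def)
lemma on1_entry [simp]: "on1 Y $ (i,j) $ (k,l) = Y $ i $ k * kd j l"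
  by (simp add: on1_def)
lemma on2_entry [simp]: "on2 Y $ (i,j) $ (k,l) = kd i k * Y $ j $ l"
  by (simp add: on2_def)
lemma on12_entry [simp]: "on12 X $ (i,j,k) $ (i',j',k') = X $ (i,j) $ (i',j') * kd k k'"
  by (simp add: on12_def)
lemma on23_entry [simp]: "on23 X $ (i,j,k) $ (i',j',k') = kd i i' * X $ (j,k) $ (j',k')"
  by (simp add: on23_def)
lemma tr_mid_entry [simp]: "tr_mid A $ (i,k) $ (i',k') = (\<Sum>j\<in>UNIV. A $ (i,j,k) $ (i',j,k'))"
  by (simp add: tr_mid_def)
lemma tr1_entry [simp]: "tr1 A $ j $ j' = (\<Sum>i\<in>UNIV. A $ (i,j) $ (i,j'))"
  by (simp add: tr1_def)
lemma tr2_entry [simp]: "tr2 A $ i $ i' = (\<Sum>j\<in>UNIV. A $ (i,j) $ (i',j))"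
  by (simp add: tr2_def)
lemma mat1_op1_entry: "(mat 1 :: ('n::finite) op1) $ i $ j = kd i j"
  by (simp add: mat_def kd_def)
lemma mat1_op2_entry [simp]: "(mat 1 :: ('n::finite) op2) $ (i,j) $ (k,l) = kd i k * kd j l"
  by (simp add: mat_def kd_def)
lemma mat1_op3_entry [simp]:
  "(mat 1 :: ('n::finite) op3) $ (i,j,k) $ (i',j',k') = kd i i' * kd j j' * kd k k'"
  by (simp add: mat_def kd_def)

lemma on1_mult: "on1 (A ** B) = on1 A ** on1 B"
  by (rule op2_eqI) (simp add: matrix_mult_entry sum_UNIV_prod sum_distrib_right kd_def)
lemma on2_mult: "on2 (A ** B) = on2 A ** on2 B"
  by (rule op2_eqI) (simp add: matrix_mult_entry sum_UNIV_prod sum_distrib_left kd_def)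
lemma on1_on2_commute: "on1 A ** on2 B = on2 B ** on1 A"
  by (rule op2_eqI) (simp add: matrix_mult_entry sum_UNIV_prod kd_def mult.commute)

lemma on12_mult: "on12 (A ** B) = on12 A ** on12 B"
  by (rule op3_eqI) (simp add: matrix_mult_entry sum_UNIV_prod sum_distrib_right kd_def)
lemma on1_mat1: "on1 (mat 1) = mat 1"
  by (rule op2_eqI) (simp add: mat1_op1_entry kd_def)
lemma on12_mat1: "on12 (mat 1) = mat 1"
  by (rule op3_eqI) (simp add: kd_def)

definition skew_mult :: "('n::finite) op2 \<Rightarrow> 'n op2 \<Rightarrow> 'n op2" where
  "skew_mult A B = tr_mid (on12 A ** on23 B)"

lemma skew_mult_entry:
  "skew_mult A B $ (i,k) $ (i',k') = (\<Sum>j\<in>UNIV. \<Sum>b\<in>UNIV. A $ (i,j) $ (i',b) * B $ (b,k) $ (j,k'))"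
  by (simp add: skew_mult_def matrix_mult_entry sum_UNIV_prod kd_def)

lemma is_skew_inverse_iff:
  "is_skew_inverse X Psi \<longleftrightarrow> skew_mult X Psi = flip \<and> skew_mult Psi X = flip"
  by (simp add: is_skew_inverse_def skew_mult_def)

text \<open>Regarding \<open>A $ (i,j) $ (i',b)\<close> as the entry in row \<open>(i,i')\<close> and column \<open>(b,j)\<close>
  turns \<open>skew_mult\<close> into the matrix product and \<open>flip\<close> into the identity; in particular
  \<open>X\<close> is skew invertible iff this realigned matrix is invertible.\<close>

definition realign :: "('n::finite) op2 \<Rightarrow> 'n op2" where
  "realign A = (\<chi> p q. A $ (fst p, snd q) $ (snd p, fst q))"

lemma realign_entry [simp]: "realign A $ (i,i') $ (b,j) = A $ (i,j) $ (i',b)"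
  by (simp add: realign_def)

lemma realign_inject: "realign A = realign B \<Longrightarrow> A = B"
  by (rule op2_eqI) (metis realign_entry)

lemma realign_skew_mult: "realign (skew_mult A B) = realign A ** realign B"
  by (rule op2_eqI) (simp add: skew_mult_entry matrix_mult_entry sum_UNIV_prod, subst sum.swap, simp)

lemma realign_flip: "realign flip = mat 1"
  by (rule op2_eqI) (simp add: kd_def)

lemma skew_mult_assoc: "skew_mult (skew_mult A B) C = skew_mult A (skew_mult B C)"
  by (rule realign_inject) (simp add: realign_skew_mult matrix_mul_assoc)

lemma skew_mult_flip_left [simp]: "skew_mult flip A = A"
  by (rule realign_inject) (simp add: realign_skew_mult realign_flip)

lemma skew_mult_flip_right [simp]: "skew_mult A flip = A"
  by (rule realign_inject) (simp add: realign_skew_mult realign_flip)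

lemma skew_inverse_unique:
  assumes "skew_mult P X = flip" and "skew_mult X Q = flip"
  shows "P = Q"
  by (metis assms skew_mult_assoc skew_mult_flip_left skew_mult_flip_right)

lemma skew_inv_eqI: "is_skew_inverse X Psi \<Longrightarrow> skew_inv X = Psi"
  unfolding skew_inv_def
  by (rule some_equality) (auto simp: is_skew_inverse_iff intro: skew_inverse_unique)

lemma skew_mult_skew_inv:
  assumes "skew_invertible X"
  shows "skew_mult X (skew_inv X) = flip" and "skew_mult (skew_inv X) X = flip"
  using assms skew_inv_eqI unfolding skew_invertible_def is_skew_inverse_iff by auto

definition op21 :: "('n::finite) op2 \<Rightarrow> 'n op2" where
  "op21 A = flip ** A ** flip"

lemma op21_entry [simp]: "op21 A $ (i,j) $ (k,l) = A $ (j,i) $ (l,k)"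
  by (simp add: op21_def matrix_mult_entry sum_UNIV_prod kd_def)

lemma op21_op21 [simp]: "op21 (op21 A) = A"
  by (rule op2_eqI) simp

lemma op21_mult: "op21 (A ** B) = op21 A ** op21 B"
  by (rule op2_eqI) (simp add: matrix_mult_entry sum_UNIV_prod, subst sum.swap, simp)

lemma op21_mat1 [simp]: "op21 (mat 1) = mat 1"
  by (rule op2_eqI) simp

lemma op21_flip [simp]: "op21 flip = flip"
  by (rule op2_eqI) (simp add: kd_def)

lemma op21_on1 [simp]: "op21 (on1 A) = on2 A"
  by (rule op2_eqI) simp

lemma op21_on2 [simp]: "op21 (on2 A) = on1 A"
  by (rule op2_eqI) simp

lemma tr1_op21 [simp]: "tr1 (op21 A) = tr2 A"
  by (simp add: vec_eq_iff)

lemma skew_mult_op21: "skew_mult (op21 A) (op21 B) = op21 (skew_mult B A)"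
  by (rule op2_eqI) (simp add: skew_mult_entry, subst sum.swap, simp add: mult.commute)

definition reverse_factors :: "('n::finite) op3 \<Rightarrow> 'n op3" where
  "reverse_factors M = (\<chi> p q. case (p,q) of ((i,j,k),(i',j',k')) \<Rightarrow> M $ (k,j,i) $ (k',j',i'))"

lemma reverse_factors_entry [simp]:
  "reverse_factors M $ (i,j,k) $ (i',j',k') = M $ (k,j,i) $ (k',j',i')"
  by (simp add: reverse_factors_def)

lemma reverse_factors_mult: "reverse_factors (A ** B) = reverse_factors A ** reverse_factors B"
  by (rule op3_eqI, simp add: matrix_mult_entry,
      rule sum.reindex_bij_witness[where i="\<lambda>(a,b,c). (c,b,a)" and j="\<lambda>(a,b,c). (c,b,a)"]) auto

lemma reverse_factors_on12 [simp]: "reverse_factors (on12 A) = on23 (op21 A)"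
  by (rule op3_eqI) (simp add: mult.commute)

lemma reverse_factors_on23 [simp]: "reverse_factors (on23 A) = on12 (op21 A)"
  by (rule op3_eqI) (simp add: mult.commute)

lemma compatible_op21: "compatible X F \<Longrightarrow> compatible (op21 X) (op21 F)"
  unfolding compatible_def
  by (metis (no_types) reverse_factors_mult reverse_factors_on12 reverse_factors_on23)

lemma transpose_on1 [simp]: "transpose (on1 A) = on1 (transpose A)"
  by (rule op2_eqI) (simp add: transpose_def kd_def)

lemma transpose_on2 [simp]: "transpose (on2 A) = on2 (transpose A)"
  by (rule op2_eqI) (simp add: transpose_def kd_def)

lemma transpose_on12: "transpose (on12 A) = on12 (transpose A)"
  by (rule op3_eqI) (simp add: transpose_def kd_def)

lemma transpose_on23: "transpose (on23 A) = on23 (transpose A)"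
  by (rule op3_eqI) (simp add: transpose_def kd_def)

lemma transpose_flip [simp]: "transpose flip = flip"
  by (rule op2_eqI) (simp add: transpose_def kd_def)

lemma transpose_op21 [simp]: "transpose (op21 A) = op21 (transpose A)"
  by (rule op2_eqI) (simp add: transpose_def)

lemma tr1_transpose: "tr1 (transpose A) = transpose (tr1 A)"
  by (simp add: vec_eq_iff transpose_def)

lemma transpose_skew_mult: "transpose (skew_mult A B) = skew_mult (transpose A) (transpose B)"
  by (rule op2_eqI) (simp add: skew_mult_entry transpose_def, subst sum.swap, simp)

lemma compatible_transpose: "compatible X F \<Longrightarrow> compatible (transpose X) (transpose F)"
  unfolding compatible_def
  by (elim conjE, drule arg_cong[where f=transpose], drule arg_cong[where f=transpose])
    (simp add: matrix_transpose_mul transpose_on12 transpose_on23 matrix_mul_assoc)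

lemma is_skew_inverse_op21: "is_skew_inverse X Psi \<Longrightarrow> is_skew_inverse (op21 X) (op21 Psi)"
  by (simp add: is_skew_inverse_iff skew_mult_op21)

lemma is_skew_inverse_transpose:
  "is_skew_inverse X Psi \<Longrightarrow> is_skew_inverse (transpose X) (transpose Psi)"
  by (metis is_skew_inverse_iff transpose_flip transpose_skew_mult)

lemma skew_inv_op21:
  "skew_invertible X \<Longrightarrow> skew_invertible (op21 X) \<and> skew_inv (op21 X) = op21 (skew_inv X)"
  by (metis is_skew_inverse_iff is_skew_inverse_op21 skew_inv_eqI skew_invertible_def
      skew_mult_skew_inv)

lemma skew_inv_transpose:
  "skew_invertible X \<Longrightarrow>
    skew_invertible (transpose X) \<and> skew_inv (transpose X) = transpose (skew_inv X)"
  by (metis is_skew_inverse_iff is_skew_inverse_transpose skew_inv_eqI skew_invertible_def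
      skew_mult_skew_inv)

lemma C_op_op21: "skew_invertible X \<Longrightarrow> C_op (op21 X) = D_op X"
  by (simp add: C_op_def D_op_def skew_inv_op21)

lemma D_op_op21: "skew_invertible X \<Longrightarrow> D_op (op21 X) = C_op X"
  by (metis C_op_op21 op21_op21 skew_inv_op21)

lemma C_op_transpose: "skew_invertible X \<Longrightarrow> C_op (transpose X) = transpose (C_op X)"
  by (simp add: C_op_def skew_inv_transpose tr1_transpose)

lemma flip_flip: "flip ** flip = mat 1"
  by (rule op2_eqI) (simp add: matrix_mult_entry sum_UNIV_prod kd_def)

lemma tr1_flip: "tr1 flip = mat 1"
  by (rule op1_eqI) (simp add: mat1_op1_entry kd_def)

lemma skew_mult_mat1_left: "skew_mult (mat 1) P = on2 (tr1 P)"
  by (rule op2_eqI) (simp add: skew_mult_entry kd_def)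

lemma skew_mult_on2_flip: "skew_mult A (on2 C ** flip) = on2 C ** A"
  by (rule op2_eqI) (simp add: skew_mult_entry matrix_mult_entry sum_UNIV_prod kd_def mult.commute)

lemma tr1_on1_tr1_mult: "tr1 (on1 (tr1 P) ** X) = tr1 (skew_mult P X)"
  by (rule op1_eqI) (simp add: skew_mult_entry matrix_mult_entry sum_UNIV_prod kd_def
      sum_distrib_right, subst (2) sum.swap, subst sum.swap, rule refl)

lemma tr1_on1_C_op_mult: "skew_invertible X \<Longrightarrow> tr1 (on1 (C_op X) ** X) = mat 1"
  by (simp add: C_op_def tr1_on1_tr1_mult skew_mult_skew_inv tr1_flip)

lemma skew_mult_eq_mat1_imp_on2_C_op:
  assumes "skew_invertible X" and "skew_mult M X = mat 1"
  shows "M = on2 (C_op X)"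
proof -
  have "M = skew_mult (skew_mult M X) (skew_inv X)"
    using assms(1) by (simp add: skew_mult_assoc skew_mult_skew_inv)
  then show ?thesis
    using assms(2) by (simp add: skew_mult_mat1_left C_op_def)
qed

lemma sum_UNIV_nested3:
  "(\<Sum>a\<in>UNIV. \<Sum>b\<in>UNIV. \<Sum>c\<in>UNIV. f a b c) =
    (\<Sum>(a,b,c)\<in>(UNIV::('a::finite \<times> 'b::finite \<times> 'c::finite) set). f a b c)"
  by (simp add: sum_UNIV_prod)

lemma sum_UNIV_nested4:
  "(\<Sum>a\<in>UNIV. \<Sum>b\<in>UNIV. \<Sum>c\<in>UNIV. \<Sum>d\<in>UNIV. f a b c d) =
    (\<Sum>(a,b,c,d)\<in>(UNIV::('a::finite \<times> 'b::finite \<times> 'c::finite \<times> 'd::finite) set). f a b c d)"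
  by (simp add: sum_UNIV_prod)

lemma sum_UNIV_nested5:
  "(\<Sum>a\<in>UNIV. \<Sum>b\<in>UNIV. \<Sum>c\<in>UNIV. \<Sum>d\<in>UNIV. \<Sum>e\<in>UNIV. f a b c d e) =
    (\<Sum>(a,b,c,d,e)\<in>(UNIV::('a::finite \<times> 'b::finite \<times> 'c::finite \<times> 'd::finite \<times> 'e::finite) set).
      f a b c d e)"
  by (simp add: sum_UNIV_prod)

text \<open>\<open>tr1_weighted C M\<close> is \<open>Tr\<^sub>(\<^sub>1\<^sub>)(C\<^sub>1 M)\<close> for \<open>M\<close> acting on \<open>V\<^sup>\<otimes>\<^sup>3\<close>.\<close>

definition tr1_weighted :: "('n::finite) op1 \<Rightarrow> 'n op3 \<Rightarrow> 'n op2" where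
  "tr1_weighted C M =
    (\<chi> p q. case (p,q) of ((j,k),(j',k')) \<Rightarrow> \<Sum>i\<in>UNIV. \<Sum>a\<in>UNIV. C $ i $ a * M $ (a,j,k) $ (i,j',k'))"

lemma tr1_weighted_entry [simp]:
  "tr1_weighted C M $ (j,k) $ (j',k') = (\<Sum>i\<in>UNIV. \<Sum>a\<in>UNIV. C $ i $ a * M $ (a,j,k) $ (i,j',k'))"
  by (simp add: tr1_weighted_def)

lemma tr1_weighted_on23_mult: "tr1_weighted C (on23 F ** M) = F ** tr1_weighted C M"
  apply (rule op2_eqI)
  apply (simp add: matrix_mult_entry sum_UNIV_prod sum_distrib_left sum_distrib_right kd_def)
  apply (simp only: sum_UNIV_nested4)
  apply (rule sum.reindex_bij_witness[where j="\<lambda>(i,a,n,m). (n,m,i,a)" and i="\<lambda>(a,b,n,m). (n,m,a,b)"])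
  apply (auto simp: mult_ac)
  done

lemma tr1_weighted_on12_on23_mult:
  "tr1_weighted C (on12 X ** on23 B) = on1 (tr1 (on1 C ** X)) ** B"
  apply (rule op2_eqI)
  apply (simp add: matrix_mult_entry sum_UNIV_prod sum_distrib_left sum_distrib_right kd_def)
  apply (simp only: sum_UNIV_nested3)
  apply (rule sum.reindex_bij_witness[where j="\<lambda>(i,a,n). (n,i,a)" and i="\<lambda>(a,n,m). (n,m,a)"])
  apply (auto simp: mult_ac)
  done

lemma tr1_weighted_on12_on23_on12_mult:
  "tr1_weighted C (on12 A ** on23 X ** on12 B) =
    skew_mult (skew_mult (op21 A) (B ** on1 C) ** flip) X"
  apply (rule op2_eqI)
  apply (simp add: skew_mult_entry matrix_mult_entry sum_UNIV_prod sum_distrib_left sum_distrib_right kd_def)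
  apply (simp only: sum_UNIV_nested5)
  apply (rule sum.reindex_bij_witness[where j="\<lambda>(i,a,n,m,l). (m,l,a,n,i)" and i="\<lambda>(j,b,n,m,l). (l,n,m,j,b)"])
  apply (auto simp: mult_ac)
  done

lemma inverse_mult_on1_C_op:
  assumes X: "skew_invertible X" and F: "skew_invertible F" and XF: "compatible X F"
    and FG: "F ** G = mat 1" and GF: "G ** F = mat 1"
  shows "G ** on1 (C_op X) = on2 (C_op X) ** op21 (skew_inv F)"
proof -
  let ?C = "C_op X" and ?U = "skew_mult (op21 F) (G ** on1 (C_op X))"
  have "on12 X ** on23 F = on12 X ** on23 F ** on12 F ** on12 G"
    by (simp add: matrix_mul_assoc[symmetric] on12_mult[symmetric] FG on12_mat1)
  also have "\<dots> = on23 F ** (on12 F ** on23 X ** on12 G)"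
    using XF by (simp add: compatible_def matrix_mul_assoc)
  finally have "F = F ** tr1_weighted ?C (on12 F ** on23 X ** on12 G)"
    by (metis tr1_weighted_on12_on23_mult tr1_weighted_on23_mult tr1_on1_C_op_mult[OF X]
        on1_mat1 matrix_mul_lid)
  then have "tr1_weighted ?C (on12 F ** on23 X ** on12 G) = mat 1"
    by (metis GF matrix_mul_assoc matrix_mul_lid)
  then have "?U ** flip = on2 ?C"
    by (intro skew_mult_eq_mat1_imp_on2_C_op[OF X]) (simp add: tr1_weighted_on12_on23_on12_mult)
  then have U: "?U = on2 ?C ** flip"
    by (metis flip_flip matrix_mul_assoc matrix_mul_rid)
  have "skew_mult (op21 (skew_inv F)) (op21 F) = flip"
    using F by (simp add: skew_mult_op21 skew_mult_skew_inv)
  then have "G ** on1 ?C = skew_mult (op21 (skew_inv F)) ?U"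
    by (simp add: skew_mult_assoc[symmetric])
  also have "\<dots> = on2 ?C ** op21 (skew_inv F)"
    by (simp add: U skew_mult_on2_flip)
  finally show ?thesis .
qed

lemma on1_C_op_mult_inverse:
  assumes X: "skew_invertible X" and F: "skew_invertible F" and XF: "compatible X F"
    and FG: "F ** G = mat 1" and GF: "G ** F = mat 1"
  shows "on1 (C_op X) ** G = op21 (skew_inv F) ** on2 (C_op X)"
proof -
  have "transpose G ** on1 (C_op (transpose X)) =
      on2 (C_op (transpose X)) ** op21 (skew_inv (transpose F))"
    using X F compatible_transpose[OF XF] arg_cong[OF GF, of transpose] arg_cong[OF FG, of transpose]
    by (intro inverse_mult_on1_C_op) (auto simp: skew_inv_transpose matrix_transpose_mul)
  then have "transpose (on1 (C_op X) ** G) = transpose (op21 (skew_inv F) ** on2 (C_op X))"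
    using X F by (simp add: C_op_transpose skew_inv_transpose matrix_transpose_mul)
  then show ?thesis
    by (metis transpose_transpose)
qed

lemma inverse_mult_on2_D_op:
  assumes X: "skew_invertible X" and F: "skew_invertible F" and XF: "compatible X F"
    and FG: "F ** G = mat 1" and GF: "G ** F = mat 1"
  shows "G ** on2 (D_op X) = on1 (D_op X) ** op21 (skew_inv F)"
proof -
  have "op21 G ** on1 (C_op (op21 X)) = on2 (C_op (op21 X)) ** op21 (skew_inv (op21 F))"
    using X F compatible_op21[OF XF] arg_cong[OF GF, of op21] arg_cong[OF FG, of op21]
    by (intro inverse_mult_on1_C_op) (auto simp: skew_inv_op21 op21_mult)
  then have "op21 (G ** on2 (D_op X)) = op21 (on1 (D_op X) ** op21 (skew_inv F))"
    using X F by (simp add: C_op_op21 skew_inv_op21 op21_mult)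
  then show ?thesis
    by (metis op21_op21)
qed

lemma on2_D_op_mult_inverse:
  assumes X: "skew_invertible X" and F: "skew_invertible F" and XF: "compatible X F"
    and FG: "F ** G = mat 1" and GF: "G ** F = mat 1"
  shows "on2 (D_op X) ** G = op21 (skew_inv F) ** on1 (D_op X)"
proof -
  have "on1 (C_op (op21 X)) ** op21 G = op21 (skew_inv (op21 F)) ** on2 (C_op (op21 X))"
    using X F compatible_op21[OF XF] arg_cong[OF GF, of op21] arg_cong[OF FG, of op21]
    by (intro on1_C_op_mult_inverse) (auto simp: skew_inv_op21 op21_mult)
  then have "op21 (on2 (D_op X) ** G) = op21 (op21 (skew_inv F) ** on1 (D_op X))"
    using X F by (simp add: C_op_op21 skew_inv_op21 op21_mult)
  then show ?thesis
    by (metis op21_op21)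
qed

lemma intertwining_from_inverse:
  fixes F G L R :: "'a::semiring_1^'n^'n"
  assumes FG: "F ** G = mat 1" and GF: "G ** F = mat 1" and "L ** G = G ** R"
  shows "F ** L = R ** F"
proof -
  have "F ** L = F ** (L ** G) ** F"
    using GF by (simp add: matrix_mul_assoc[symmetric])
  also have "\<dots> = F ** G ** R ** F"
    by (simp add: assms(3) matrix_mul_assoc)
  also have "\<dots> = R ** F"
    using FG by simp
  finally show ?thesis .
qed

lemma intertwining_on1_on2:
  assumes X: "skew_invertible X" and Y: "skew_invertible Y" and F: "skew_invertible F"
    and XF: "compatible X F" and YF: "compatible Y F"
    and FG: "F ** G = mat 1" and GF: "G ** F = mat 1"
  shows "F ** on1 (C_op X) ** on2 (C_op Y) = on1 (C_op Y) ** on2 (C_op X) ** F"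
    and "F ** on1 (D_op X) ** on2 (D_op Y) = on1 (D_op Y) ** on2 (D_op X) ** F"
proof -
  let ?P = "op21 (skew_inv F)"
  have "on1 (C_op X) ** on2 (C_op Y) ** G = on2 (C_op Y) ** (on1 (C_op X) ** G)"
    by (simp add: on1_on2_commute matrix_mul_assoc)
  also have "\<dots> = on2 (C_op Y) ** ?P ** on2 (C_op X)"
    by (simp add: on1_C_op_mult_inverse[OF X F XF FG GF] matrix_mul_assoc)
  also have "\<dots> = G ** (on1 (C_op Y) ** on2 (C_op X))"
    by (simp add: inverse_mult_on1_C_op[OF Y F YF FG GF] matrix_mul_assoc)
  finally have "F ** (on1 (C_op X) ** on2 (C_op Y)) = on1 (C_op Y) ** on2 (C_op X) ** F"
    by (rule intertwining_from_inverse[OF FG GF])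
  then show "F ** on1 (C_op X) ** on2 (C_op Y) = on1 (C_op Y) ** on2 (C_op X) ** F"
    by (simp add: matrix_mul_assoc)
  have "on1 (D_op X) ** on2 (D_op Y) ** G = on1 (D_op X) ** ?P ** on1 (D_op Y)"
    by (simp add: on2_D_op_mult_inverse[OF Y F YF FG GF] matrix_mul_assoc[symmetric])
  also have "\<dots> = G ** (on1 (D_op Y) ** on2 (D_op X))"
    by (simp add: inverse_mult_on2_D_op[OF X F XF FG GF] on1_on2_commute matrix_mul_assoc)
  finally have "F ** (on1 (D_op X) ** on2 (D_op Y)) = on1 (D_op Y) ** on2 (D_op X) ** F"
    by (rule intertwining_from_inverse[OF FG GF])
  then show "F ** on1 (D_op X) ** on2 (D_op Y) = on1 (D_op Y) ** on2 (D_op X) ** F"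
    by (simp add: matrix_mul_assoc)
qed

lemma intertwining_C_op_D_op_products:
  assumes X: "skew_invertible X" and Y: "skew_invertible Y" and F: "skew_invertible F"
    and XF: "compatible X F" and YF: "compatible Y F"
    and FG: "F ** G = mat 1" and GF: "G ** F = mat 1"
  shows "F ** on2 (C_op X ** D_op Y) = on1 (C_op X ** D_op Y) ** F"
    and "F ** on1 (D_op Y ** C_op X) = on2 (D_op Y ** C_op X) ** F"
proof -
  let ?P = "op21 (skew_inv F)"
  have "on2 (C_op X ** D_op Y) ** G = on2 (C_op X) ** ?P ** on1 (D_op Y)"
    by (simp add: on2_mult on2_D_op_mult_inverse[OF Y F YF FG GF] matrix_mul_assoc[symmetric])
  also have "\<dots> = G ** on1 (C_op X ** D_op Y)"
    by (simp add: on1_mult inverse_mult_on1_C_op[OF X F XF FG GF] matrix_mul_assoc)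
  finally show "F ** on2 (C_op X ** D_op Y) = on1 (C_op X ** D_op Y) ** F"
    by (rule intertwining_from_inverse[OF FG GF])
  have "on1 (D_op Y ** C_op X) ** G = on1 (D_op Y) ** ?P ** on2 (C_op X)"
    by (simp add: on1_mult on1_C_op_mult_inverse[OF X F XF FG GF] matrix_mul_assoc[symmetric])
  also have "\<dots> = G ** on2 (D_op Y ** C_op X)"
    by (simp add: on2_mult inverse_mult_on2_D_op[OF Y F YF FG GF] matrix_mul_assoc)
  finally show "F ** on1 (D_op Y ** C_op X) = on2 (D_op Y ** C_op X) ** F"
    by (rule intertwining_from_inverse[OF FG GF])
qed

lemma tr1_on1_mult_commute: "tr1 (on1 A ** M) = tr1 (M ** on1 A)"
  by (rule op1_eqI) (simp add: matrix_mult_entry sum_UNIV_prod kd_def sum_distrib_left,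
      subst sum.swap, simp add: mult.commute)

lemma tr1_mult_on2: "tr1 (M ** on2 B) = tr1 M ** B"
  by (rule op1_eqI) (simp add: matrix_mult_entry sum_UNIV_prod kd_def sum_distrib_right,
      subst sum.swap, simp)

lemma tr1_on2_mult: "tr1 (on2 B ** M) = B ** tr1 M"
  by (rule op1_eqI) (simp add: matrix_mult_entry sum_UNIV_prod kd_def sum_distrib_left,
      subst sum.swap, simp)

lemma tr1_on1_C_op_mult_inverse:
  assumes "skew_invertible X" and "skew_invertible F" and "compatible X F"
    and "F ** G = mat 1" and "G ** F = mat 1"
  shows "tr1 (on1 (C_op X) ** G) = C_op X ** D_op F"
    and "tr1 (on1 (C_op X) ** G) = D_op F ** C_op X"
proof -
  have "tr1 (on1 (C_op X) ** G) = tr1 (G ** on1 (C_op X))"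
    by (rule tr1_on1_mult_commute)
  also have "\<dots> = C_op X ** D_op F"
    by (simp add: inverse_mult_on1_C_op[OF assms] tr1_on2_mult D_op_def)
  finally show "tr1 (on1 (C_op X) ** G) = C_op X ** D_op F" .
  show "tr1 (on1 (C_op X) ** G) = D_op F ** C_op X"
    by (simp add: on1_C_op_mult_inverse[OF assms] tr1_mult_on2 D_op_def)
qed

lemma tr2_on2_D_op_mult_inverse:
  assumes X: "skew_invertible X" and F: "skew_invertible F" and XF: "compatible X F"
    and FG: "F ** G = mat 1" and GF: "G ** F = mat 1"
  shows "tr2 (on2 (D_op X) ** G) = C_op F ** D_op X"
    and "tr2 (on2 (D_op X) ** G) = D_op X ** C_op F"
proof -
  have "tr2 (on2 (D_op X) ** G) = tr1 (on1 (C_op (op21 X)) ** op21 G)"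
    using X by (metis C_op_op21 op21_mult op21_on2 tr1_op21)
  moreover have "skew_invertible (op21 X)" "skew_invertible (op21 F)"
    "op21 F ** op21 G = mat 1" "op21 G ** op21 F = mat 1"
    using X F FG GF by (auto simp: skew_inv_op21 op21_mult[symmetric])
  ultimately show "tr2 (on2 (D_op X) ** G) = C_op F ** D_op X"
    and "tr2 (on2 (D_op X) ** G) = D_op X ** C_op F"
    using tr1_on1_C_op_mult_inverse[of "op21 X" "op21 F" "op21 G"] compatible_op21[OF XF] X F
    by (auto simp: C_op_op21 D_op_op21)
qed

lemma invertible_matrix_inv:
  assumes "invertible A"
  shows "A ** matrix_inv A = mat 1" and "matrix_inv A ** A = mat 1"
  using someI_ex[OF assms[unfolded invertible_def]] by (auto simp: matrix_inv_def)

theorem corollary3p4: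
  fixes X Y F :: "('n::finite) op2"
  assumes "skew_invertible X" and "skew_invertible Y" and "skew_invertible F"
    and "invertible F"
    and "compatible X F" and "compatible Y F"
  shows "(F ** on1 (C_op X) ** on2 (C_op Y) = on1 (C_op Y) ** on2 (C_op X) ** F) \<and>
    (F ** on1 (D_op X) ** on2 (D_op Y) = on1 (D_op Y) ** on2 (D_op X) ** F) \<and>
    (F ** on2 (C_op X ** D_op Y) = on1 (C_op X ** D_op Y) ** F) \<and>
    (F ** on1 (D_op Y ** C_op X) = on2 (D_op Y ** C_op X) ** F) \<and>
    (tr1 (on1 (C_op X) ** matrix_inv F) = C_op X ** D_op F) \<and>
    (C_op X ** D_op F = D_op F ** C_op X) \<and>
    (tr2 (on2 (D_op X) ** matrix_inv F) = C_op F ** D_op X) \<and>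
    (C_op F ** D_op X = D_op X ** C_op F)"
proof -
  note inverse = invertible_matrix_inv[OF assms(4)]
  show ?thesis
    using intertwining_on1_on2[OF assms(1,2,3,5,6) inverse]
      intertwining_C_op_D_op_products[OF assms(1,2,3,5,6) inverse]
      tr1_on1_C_op_mult_inverse[OF assms(1,3,5) inverse]
      tr2_on2_D_op_mult_inverse[OF assms(1,3,5) inverse]
    by (metis (no_types))
qed

end
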